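(* Let $\Phi\colon\mathcal{M}(2;\mathbb{C})\to\mathcal{M}(2;\mathbb{C})$ be a polynomial automorphism compatible with conjugation. Then the discriminant hypersurface $\Delta=\{\mathrm{M}\in\mathcal{M}(2;\mathbb{C}):4\det\mathrm{M}-(\mathrm{tr}\,\mathrm{M})^2=0\}$ is invariant by $\Phi$; consequently the conic $v=u^2/4$ is invariant by $\mathrm{Sq}\,\Phi$.
   Context: $\mathrm{Inv}\colon\mathcal{M}(2;\mathbb{C})\to\mathbb{C}^2$, $\mathrm{M}\mapsto(\mathrm{tr}\,\mathrm{M},\det\mathrm{M})$. For $\Phi$ compatible with conjugation (i.e. $\mathrm{A}\Phi(\mathrm{M})\mathrm{A}^{-1}=\Phi(\mathrm{A}\mathrm{M}\mathrm{A}^{-1})$ for all $\mathrm{A}\in\mathrm{GL}(2;\mathbb{C})$), $\mathrm{Sq}\,\Phi\colon\mathbb{C}^2\dashrightarrow\mathbb{C}^2$ is the rational map, in coordinates $(u,v)$, with $\mathrm{Inv}\circ\Phi=\mathrm{Sq}\,\Phi\circ\mathrm{Inv}$. *)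

theory Defs
  imports "HOL-Analysis.Analysis"
begin

type_synonym mat2 = "complex^2^2"

definition tr2 :: "mat2 \<Rightarrow> complex" where
  "tr2 M = M $ 1 $ 1 + M $ 2 $ 2"

definition Inv :: "mat2 \<Rightarrow> complex \<times> complex" where
  "Inv M = (tr2 M, det M)"

definition poly_fun_mat2 :: "(mat2 \<Rightarrow> complex) \<Rightarrow> bool" where
  "poly_fun_mat2 f \<longleftrightarrow>
     (\<exists>(c :: nat \<Rightarrow> nat \<Rightarrow> nat \<Rightarrow> nat \<Rightarrow> complex) (N :: nat).
        \<forall>M. f M = (\<Sum>i\<le>N. \<Sum>j\<le>N. \<Sum>k\<le>N. \<Sum>l\<le>N.
                      c i j k l * (M $ 1 $ 1) ^ i * (M $ 1 $ 2) ^ j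
                                * (M $ 2 $ 1) ^ k * (M $ 2 $ 2) ^ l))"

definition poly_map_mat2 :: "(mat2 \<Rightarrow> mat2) \<Rightarrow> bool" where
  "poly_map_mat2 F \<longleftrightarrow> (\<forall>i j. poly_fun_mat2 (\<lambda>M. F M $ i $ j))"

definition poly_automorphism_mat2 :: "(mat2 \<Rightarrow> mat2) \<Rightarrow> bool" where
  "poly_automorphism_mat2 F \<longleftrightarrow>
     (\<exists>G. poly_map_mat2 F \<and> poly_map_mat2 G \<and> (\<forall>M. G (F M) = M) \<and> (\<forall>M. F (G M) = M))"

definition compatible_with_conjugation :: "(mat2 \<Rightarrow> mat2) \<Rightarrow> bool" where
  "compatible_with_conjugation F \<longleftrightarrow>
     (\<forall>A M. invertible A \<longrightarrow>
        A ** F M ** matrix_inv A = F (A ** M ** matrix_inv A))"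

definition discriminant_hypersurface :: "mat2 set" where
  "discriminant_hypersurface = {M. 4 * det M - (tr2 M)^2 = 0}"

definition discriminant_conic :: "(complex \<times> complex) set" where
  "discriminant_conic = {(u, v). v = u^2 / 4}"

end

theory Submission
  imports Defs
begin

text \<open>A map compatible with conjugation sends every matrix to one commuting with it: some
  shift \<open>M + c I\<close> is invertible and centralises \<open>M\<close>, hence centralises \<open>\<Phi> M\<close>. For a
  non-scalar \<open>M\<close> the commutant of \<open>M\<close> is spanned by \<open>I\<close> and \<open>M\<close>, so \<open>\<Phi> M = a I + b M\<close>
  and the discriminant \<open>(tr)\<^sup>2 - 4 det\<close> of \<open>\<Phi> M\<close> is \<open>b\<^sup>2\<close> times that of \<open>M\<close>; for a scalar \<open>M\<close> the image commutes with all
  invertible matrices and is scalar again. Applying this to \<open>\<Phi>\<close> and to its inverse,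
  which is compatible with conjugation too, shows \<open>\<Phi> \<Delta> = \<Delta>\<close>; the conic is
  \<open>Inv \<Delta>\<close>, so \<open>Sq \<Phi>\<close> preserves it.\<close>

lemma matrix_inv_invertible:
  assumes "invertible (A :: 'a::semiring_1^'n^'n)"
  shows "A ** matrix_inv A = mat 1" and "matrix_inv A ** A = mat 1"
  using someI_ex[OF assms[unfolded invertible_def]] unfolding matrix_inv_def by auto

lemma matrix_mul_mat_commute: "mat c ** (A :: 'a::comm_semiring_1^'n^'n) = A ** mat c"
  by (simp add: matrix_matrix_mult_def mat_def vec_eq_iff if_distrib if_distribR
      mult.commute cong: if_cong)

lemma commute_of_commute_add_mat:
  fixes M X :: "'a::comm_ring_1^'n^'n"
  assumes "(M + mat c) ** X = X ** (M + mat c)"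
  shows "M ** X = X ** M"
proof -
  have "(M + mat c) ** X = M ** X + mat c ** X" "X ** (M + mat c) = X ** M + X ** mat c"
    by (vector matrix_matrix_mult_def sum.distrib distrib_right distrib_left)+
  then show ?thesis
    using assms by (simp add: matrix_mul_mat_commute)
qed

lemma mat2_mult_nth: "((A :: mat2) ** B) $ i $ j = A$i$1 * B$1$j + A$i$2 * B$2$j"
  by (simp add: matrix_matrix_mult_def sum_2)

lemma mat2_eq_iff:
  "(A :: mat2) = B \<longleftrightarrow> A$1$1 = B$1$1 \<and> A$1$2 = B$1$2 \<and> A$2$1 = B$2$1 \<and> A$2$2 = B$2$2"
  by (auto simp: vec_eq_iff forall_2)

lemma mat2_commute_iff:
  "(M :: mat2) ** X = X ** M \<longleftrightarrow>
     M$1$2 * X$2$1 = X$1$2 * M$2$1 \<and>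
     M$1$2 * (X$1$1 - X$2$2) = X$1$2 * (M$1$1 - M$2$2) \<and>
     M$2$1 * (X$1$1 - X$2$2) = X$2$1 * (M$1$1 - M$2$2)"
  by (simp add: mat2_eq_iff mat2_mult_nth algebra_simps) (auto simp: algebra_simps)

definition disc2 :: "mat2 \<Rightarrow> complex" where
  "disc2 M = (M$1$1 - M$2$2)^2 + 4 * M$1$2 * M$2$1"

lemma discriminant_hypersurface_iff_disc2: "M \<in> discriminant_hypersurface \<longleftrightarrow> disc2 M = 0"
proof -
  have "4 * det M - (tr2 M)^2 = - disc2 M"
    by (simp add: disc2_def det_2 tr2_def algebra_simps power2_eq_square)
  then show ?thesis
    unfolding discriminant_hypersurface_def by auto
qed

lemma disc2_mat [simp]: "disc2 (mat a) = 0"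
  by (simp add: disc2_def mat_def)

text \<open>Commutation makes \<open>(X\<^sub>1\<^sub>1 - X\<^sub>2\<^sub>2, X\<^sub>1\<^sub>2, X\<^sub>2\<^sub>1)\<close> proportional to the nonzero vector
  \<open>(M\<^sub>1\<^sub>1 - M\<^sub>2\<^sub>2, M\<^sub>1\<^sub>2, M\<^sub>2\<^sub>1)\<close>; multiplying \<open>disc2 X\<close> by the square of each coordinate
  of the latter gives a multiple of \<open>disc2 M\<close>.\<close>
lemma disc2_eq_0_of_commute:
  assumes "M ** X = X ** M" and "disc2 M = 0" and "M$1$1 \<noteq> M$2$2 \<or> M$1$2 \<noteq> 0 \<or> M$2$1 \<noteq> 0"
  shows "disc2 X = 0"
proof -
  define e q r d y x where "e = M$1$1 - M$2$2" and "q = M$1$2" and "r = M$2$1"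
    and "d = X$1$1 - X$2$2" and "y = X$1$2" and "x = X$2$1"
  have E1: "q * x = y * r" and E2: "q * d = y * e" and E3: "r * d = x * e"
    using assms(1) by (simp_all add: mat2_commute_iff e_def q_def r_def d_def y_def x_def)
  have H: "e^2 + 4*q*r = 0" and nz: "e \<noteq> 0 \<or> q \<noteq> 0 \<or> r \<noteq> 0"
    using assms(2,3) by (simp_all add: disc2_def e_def q_def r_def)
  have "e^2 * (d^2 + 4*y*x) = d^2 * (e^2 + 4*q*r) + 4 * ((y*e)*(x*e) - (q*d)*(r*d))"
    by (simp add: algebra_simps power2_eq_square)
  with E2 E3 H have "e^2 * (d^2 + 4*y*x) = 0"
    by simp
  moreover have "q^2 * (d^2 + 4*y*x) = y^2 * (e^2 + 4*q*r)"
    using E1 E2 by (simp add: algebra_simps power2_eq_square) (metis mult.assoc mult.left_commute)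
  moreover have "r^2 * (d^2 + 4*y*x) = x^2 * (e^2 + 4*q*r)"
    using E1 E3 by (simp add: algebra_simps power2_eq_square) (metis mult.assoc mult.left_commute)
  ultimately have "d^2 + 4*y*x = 0"
    using H nz by auto
  then show ?thesis
    by (simp add: disc2_def d_def y_def x_def mult.assoc)
qed

lemma compatible_with_conjugation_commute:
  assumes "compatible_with_conjugation F" and "invertible A" and "A ** M = M ** A"
  shows "A ** F M = F M ** A"
proof -
  note inv = matrix_inv_invertible[OF assms(2)]
  have "A ** M ** matrix_inv A = M"
    using assms(3) inv by (metis matrix_mul_assoc matrix_mul_rid)
  then have conj: "A ** F M ** matrix_inv A = F M"
    using assms(1,2) unfolding compatible_with_conjugation_def by metis
  have "F M ** A = A ** F M ** (matrix_inv A ** A)"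
    by (metis conj matrix_mul_assoc)
  then show ?thesis
    using inv by simp
qed

text \<open>\<open>det (M + c I)\<close> is monic quadratic in \<open>c\<close>, so its second difference at \<open>0, 1, 2\<close> is \<open>2\<close>.\<close>
lemma exists_invertible_add_mat: "\<exists>c. invertible ((M :: mat2) + mat c)"
proof (rule ccontr)
  define f where "f c = det (M + mat c)" for c
  have f: "f c = (M$1$1 + c) * (M$2$2 + c) - M$1$2 * M$2$1" for c
    by (simp add: f_def det_2 mat_def)
  assume "\<nexists>c. invertible (M + mat c)"
  then have "f c = 0" for c
    unfolding f_def invertible_det_nz by blast
  then have "f 2 - 2 * f 1 + f 0 = 0"
    by simp
  moreover have "f 2 - 2 * f 1 + f 0 = 2"
    by (simp add: f algebra_simps)
  ultimately show False
    by simp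
qed

lemma compatible_with_conjugation_commute_self:
  assumes "compatible_with_conjugation F"
  shows "M ** F M = F M ** M"
proof -
  obtain c where inv: "invertible (M + mat c)"
    using exists_invertible_add_mat by blast
  have "(M + mat c) ** M = M ** (M + mat c)"
    by (simp add: mat2_eq_iff mat2_mult_nth mat_def algebra_simps)
  then have "(M + mat c) ** F M = F M ** (M + mat c)"
    using compatible_with_conjugation_commute[OF assms inv] by metis
  then show ?thesis
    by (rule commute_of_commute_add_mat)
qed

text \<open>The two elementary shears already force a commuting matrix to be scalar.\<close>
lemma compatible_with_conjugation_mat:
  assumes "compatible_with_conjugation F"
  obtains b where "F (mat a) = mat b"
proof -
  define S T :: mat2 where "S = (\<chi> i j. if i = 1 \<and> j = 2 then 1 else if i = j then 1 else 0)"
    and "T = (\<chi> i j. if i = 2 \<and> j = 1 then 1 else if i = j then 1 else 0)"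
  have "invertible S" "invertible T"
    by (simp_all add: invertible_det_nz det_2 S_def T_def)
  moreover have "S ** mat a = mat a ** S" "T ** mat a = mat a ** T"
    by (simp_all add: matrix_mul_mat_commute)
  ultimately have "S ** F (mat a) = F (mat a) ** S" "T ** F (mat a) = F (mat a) ** T"
    using compatible_with_conjugation_commute[OF assms] by blast+
  then have "F (mat a) = mat (F (mat a) $ 1 $ 1)"
    by (simp add: mat2_eq_iff mat2_mult_nth S_def T_def mat_def)
  then show thesis
    by (rule that)
qed

lemma compatible_with_conjugation_discriminant:
  assumes "compatible_with_conjugation F" and "M \<in> discriminant_hypersurface"
  shows "F M \<in> discriminant_hypersurface"
proof (cases "M = mat (M$1$1)")
  case True
  then obtain b where "F M = mat b"
    using compatible_with_conjugation_mat[OF assms(1)] by metis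
  then show ?thesis
    by (simp add: discriminant_hypersurface_iff_disc2)
next
  case False
  then have "M$1$1 \<noteq> M$2$2 \<or> M$1$2 \<noteq> 0 \<or> M$2$1 \<noteq> 0"
    by (auto simp: mat2_eq_iff mat_def)
  with assms(2) show ?thesis
    using disc2_eq_0_of_commute[OF compatible_with_conjugation_commute_self[OF assms(1)]]
    by (simp add: discriminant_hypersurface_iff_disc2)
qed

lemma compatible_with_conjugation_inverse:
  assumes "compatible_with_conjugation F" and "\<And>M. G (F M) = M" and "\<And>M. F (G M) = M"
  shows "compatible_with_conjugation G"
  unfolding compatible_with_conjugation_def
proof (intro allI impI)
  fix A M :: mat2
  assume "invertible A"
  then have "F (A ** G M ** matrix_inv A) = A ** M ** matrix_inv A"
    using assms(1,3) unfolding compatible_with_conjugation_def by metis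
  then show "A ** G M ** matrix_inv A = G (A ** M ** matrix_inv A)"
    by (metis assms(2))
qed

lemma Inv_image_discriminant_hypersurface: "Inv ` discriminant_hypersurface = discriminant_conic"
proof
  show "Inv ` discriminant_hypersurface \<subseteq> discriminant_conic"
    by (auto simp: Inv_def discriminant_conic_def discriminant_hypersurface_def field_simps)
  show "discriminant_conic \<subseteq> Inv ` discriminant_hypersurface"
  proof
    fix p
    assume "p \<in> discriminant_conic"
    then obtain u where p: "p = (u, u^2/4)"
      by (auto simp: discriminant_conic_def)
    have "Inv (mat (u/2)) = p"
      by (simp add: p Inv_def tr2_def det_2 mat_def power2_eq_square)
    moreover have "mat (u/2) \<in> discriminant_hypersurface"
      by (simp add: discriminant_hypersurface_iff_disc2)
    ultimately show "p \<in> Inv ` discriminant_hypersurface"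
      by blast
  qed
qed

theorem proposition2p25:
  fixes \<Phi> :: "mat2 \<Rightarrow> mat2"
  assumes "poly_automorphism_mat2 \<Phi>"
    and "compatible_with_conjugation \<Phi>"
  shows "\<Phi> ` discriminant_hypersurface = discriminant_hypersurface \<and>
         (\<forall>SqPhi :: complex \<times> complex \<Rightarrow> complex \<times> complex.
           (\<forall>M. Inv (\<Phi> M) = SqPhi (Inv M)) \<longrightarrow>
           SqPhi ` discriminant_conic = discriminant_conic)"
proof -
  obtain G where GF: "\<And>M. G (\<Phi> M) = M" and FG: "\<And>M. \<Phi> (G M) = M"
    using assms(1) unfolding poly_automorphism_mat2_def by blast
  have G: "compatible_with_conjugation G"
    using compatible_with_conjugation_inverse[OF assms(2) GF FG] .
  have \<Delta>: "\<Phi> ` discriminant_hypersurface = discriminant_hypersurface"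
  proof (intro equalityI subsetI)
    fix M
    assume "M \<in> discriminant_hypersurface"
    then show "M \<in> \<Phi> ` discriminant_hypersurface"
      using compatible_with_conjugation_discriminant[OF G] FG by (metis image_eqI)
  qed (auto intro: compatible_with_conjugation_discriminant[OF assms(2)])
  have "SqPhi ` discriminant_conic = discriminant_conic"
    if "\<forall>M. Inv (\<Phi> M) = SqPhi (Inv M)" for SqPhi
  proof -
    have "SqPhi ` Inv ` discriminant_hypersurface = Inv ` \<Phi> ` discriminant_hypersurface"
      using that by (simp add: image_image)
    then show ?thesis
      by (simp add: \<Delta> Inv_image_discriminant_hypersurface)
  qed
  with \<Delta> show ?thesis
    by blast
qed

end
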